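(* Let $\mathcal{X}\subseteq\mathbb{R}^d$ be closed and convex and $f:\mathcal{X}\to\mathbb{R}$ convex and continuously differentiable. Let $\alpha,\beta:\mathbb{R}\to\mathbb{R}$ be smooth with $0<\dot\beta_t\le e^{\alpha_t}$ for all $t$. Suppose $t\mapsto X_t\in\mathcal{X}$ is differentiable and $Z_t:=X_t+\dot\beta_t^{-1}\dot X_t$ satisfies $\langle\nabla f(X_t),x-Z_t\rangle\ge0$ for all $x\in\mathcal{X}$ and all $t$. Then for every $x\in\mathcal{X}$, the function $\mathcal{E}_t=e^{\beta_t}\big(f(X_t)-f(x)\big)$ is nonincreasing in $t$; in particular, if $x^\ast$ minimizes $f$ over $\mathcal{X}$, then $f(X_t)-f(x^\ast)\le e^{\beta_0-\beta_t}\big(f(X_0)-f(x^\ast)\big)$ for $t\ge0$. *)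

theory Defs
  imports "HOL-Analysis.Analysis"
begin

definition smooth_real :: "(real \<Rightarrow> real) \<Rightarrow> bool" where
  "smooth_real g \<longleftrightarrow> (\<forall>n t. ((deriv ^^ n) g) differentiable (at t))"

end

theory Submission
  imports Defs
begin

text \<open>Along the dynamics, the variational condition bounds the rate of change of \<open>f (X t)\<close> by
  \<open>\<beta>' t * \<langle>\<nabla>f (X t), x - X t\<rangle>\<close>, and convexity bounds the inner product by \<open>f x - f (X t)\<close>.
  Hence \<open>d/dt (exp (\<beta> t) * (f (X t) - f x)) = exp (\<beta> t) * (\<beta>' t * (f (X t) - f x) + d/dt f (X t)) \<le> 0\<close>,
  and the rate bound is the case \<open>s = 0\<close> of the resulting monotonicity.\<close>

lemma convex_on_above_linearization:
  fixes f :: "'a::real_normed_vector \<Rightarrow> real"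
  assumes "convex S" and "convex_on S f"
    and deriv: "(f has_derivative f') (at y within S)"
    and x: "x \<in> S" and y: "y \<in> S"
  shows "f y + f' (x - y) \<le> f x"
proof -
  define g where "g u = f (y + u *\<^sub>R (x - y))" for u :: real
  let ?p = "\<lambda>u. y + u *\<^sub>R (x - y)"
  have segment: "?p ` {0..1} \<subseteq> S"
  proof
    fix z assume "z \<in> ?p ` {0..1}"
    then obtain u where u: "u \<in> {0..1}" "z = (1 - u) *\<^sub>R y + u *\<^sub>R x"
      by (auto simp: algebra_simps)
    then show "z \<in> S" using \<open>convex S\<close> x y by (auto intro: convexD)
  qed
  have "linear f'" using deriv by (rule has_derivative_linear)
  then have scale: "(\<lambda>h. f' (h *\<^sub>R (x - y))) = (*) (f' (x - y))"
    by (auto simp: linear_scale)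
  have "(?p has_derivative (\<lambda>h. h *\<^sub>R (x - y))) (at 0 within {0..1})"
    by (auto intro!: derivative_eq_intros)
  moreover have "(f has_derivative f') (at (?p 0) within ?p ` {0..1})"
    using has_derivative_subset[OF deriv segment] by simp
  ultimately have "(g has_derivative (\<lambda>h. f' (h *\<^sub>R (x - y)))) (at 0 within {0..1})"
    unfolding g_def by (rule has_derivative_in_compose)
  then have "(g has_real_derivative f' (x - y)) (at 0 within {0..1})"
    by (simp add: scale has_field_derivative_def)
  then have "((\<lambda>u. (g u - g 0) / (u - 0)) \<longlongrightarrow> f' (x - y)) (at 0 within {0..1})"
    by (simp add: has_field_derivative_iff)
  moreover have "eventually (\<lambda>u. (g u - g 0) / (u - 0) \<le> f x - f y) (at 0 within {0..1})"
    unfolding eventually_at_filter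
  proof (intro always_eventually allI impI)
    fix u :: real assume "u \<noteq> 0" and "u \<in> {0..1}"
    then have u: "0 < u" "u \<le> 1" by auto
    have "y + u *\<^sub>R (x - y) = (1 - u) *\<^sub>R y + u *\<^sub>R x" by (simp add: algebra_simps)
    then have "g u \<le> (1 - u) * f y + u * f x"
      unfolding g_def using convex_onD[OF \<open>convex_on S f\<close>, of u y x] u x y by simp
    then have "g u - g 0 \<le> u * (f x - f y)" by (simp add: g_def algebra_simps)
    then show "(g u - g 0) / (u - 0) \<le> f x - f y" using u by (simp add: divide_simps mult.commute)
  qed
  moreover have "at (0::real) within {0..1} \<noteq> bot"
    by (simp add: at_within_Icc_at_right)
  ultimately have "f' (x - y) \<le> f x - f y" by (rule tendsto_upperbound)
  then show ?thesis by simp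
qed

lemma has_real_derivative_comp_curve:
  fixes f :: "'a::real_inner \<Rightarrow> real"
  assumes "(f has_derivative (\<lambda>h. g \<bullet> h)) (at (X t) within S)"
    and "\<And>t. X t \<in> S"
    and "(X has_vector_derivative V) (at t)"
  shows "((\<lambda>t. f (X t)) has_real_derivative (g \<bullet> V)) (at t)"
proof -
  have "range X \<subseteq> S" using assms(2) by auto
  with assms(1) have "(f has_derivative (\<lambda>h. g \<bullet> h)) (at (X t) within range X)"
    by (rule has_derivative_subset)
  with assms(3) have "((\<lambda>t. f (X t)) has_derivative (\<lambda>h. g \<bullet> (h *\<^sub>R V))) (at t)"
    unfolding has_vector_derivative_def by (rule has_derivative_in_compose)
  moreover have "(\<lambda>h. g \<bullet> (h *\<^sub>R V)) = (*) (g \<bullet> V)" by (auto simp: mult.commute)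
  ultimately show ?thesis by (simp add: has_field_derivative_def)
qed

lemma lyapunov_energy_nonincreasing:
  fixes f :: "'a::real_inner \<Rightarrow> real"
  assumes "convex S" and "convex_on S f"
    and df: "\<And>y. y \<in> S \<Longrightarrow> (f has_derivative (\<lambda>h. gradf y \<bullet> h)) (at y within S)"
    and \<beta>: "\<And>t. (\<beta> has_real_derivative \<beta>' t) (at t)" and \<beta>'_pos: "\<And>t. 0 < \<beta>' t"
    and XS: "\<And>t. X t \<in> S" and X: "\<And>t. (X has_vector_derivative V t) (at t)"
    and x: "x \<in> S"
    and variational: "\<And>t. gradf (X t) \<bullet> (x - (X t + (1 / \<beta>' t) *\<^sub>R V t)) \<ge> 0"
    and "s \<le> t"
  shows "exp (\<beta> t) * (f (X t) - f x) \<le> exp (\<beta> s) * (f (X s) - f x)"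
proof (rule DERIV_nonpos_imp_nonincreasing[OF \<open>s \<le> t\<close>])
  fix u
  let ?D = "exp (\<beta> u) * (\<beta>' u * (f (X u) - f x) + gradf (X u) \<bullet> V u)"
  have "((\<lambda>t. f (X t)) has_real_derivative gradf (X u) \<bullet> V u) (at u)"
    by (rule has_real_derivative_comp_curve[OF df[OF XS] XS X])
  then have "((\<lambda>t. exp (\<beta> t) * (f (X t) - f x)) has_real_derivative ?D) (at u)"
    by (auto intro!: derivative_eq_intros \<beta> simp: algebra_simps)
  moreover have "?D \<le> 0"
  proof -
    have "(1 / \<beta>' u) * (gradf (X u) \<bullet> V u) \<le> gradf (X u) \<bullet> (x - X u)"
      using variational[of u] by (simp add: inner_diff_right inner_add_right)
    then have "gradf (X u) \<bullet> V u \<le> \<beta>' u * (gradf (X u) \<bullet> (x - X u))"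
      using \<beta>'_pos[of u] by (simp add: divide_simps mult.commute)
    also have "\<dots> \<le> \<beta>' u * (f x - f (X u))"
      using convex_on_above_linearization[OF assms(1,2) df[OF XS[of u]] x XS[of u]] \<beta>'_pos[of u]
      by (intro mult_left_mono) auto
    finally have "\<beta>' u * (f (X u) - f x) + gradf (X u) \<bullet> V u \<le> 0"
      by (simp add: algebra_simps)
    then show ?thesis by (simp add: mult_nonneg_nonpos)
  qed
  ultimately show "\<exists>D. ((\<lambda>t. exp (\<beta> t) * (f (X t) - f x)) has_real_derivative D) (at u) \<and> D \<le> 0"
    by blast
qed

theorem proposition9:
  fixes S :: "'a::euclidean_space set"
    and f :: "'a \<Rightarrow> real"
    and gradf :: "'a \<Rightarrow> 'a"
    and \<alpha> \<beta> :: "real \<Rightarrow> real"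
    and X :: "real \<Rightarrow> 'a"
  assumes "closed S" and "convex S"
    and "convex_on S f"
    and "\<And>y. y \<in> S \<Longrightarrow> (f has_derivative (\<lambda>h. gradf y \<bullet> h)) (at y within S)"
    and "continuous_on S gradf"
    and "smooth_real \<alpha>" and "smooth_real \<beta>"
    and "\<And>t. 0 < deriv \<beta> t" and "\<And>t. deriv \<beta> t \<le> exp (\<alpha> t)"
    and "\<And>t. X t \<in> S"
    and "\<And>t. X differentiable (at t)"
    and "\<And>t x. x \<in> S \<Longrightarrow>
           gradf (X t) \<bullet> (x - (X t + (1 / deriv \<beta> t) *\<^sub>R vector_derivative X (at t))) \<ge> 0"
  shows "(\<forall>x\<in>S. \<forall>s t. s \<le> t \<longrightarrow>
            exp (\<beta> t) * (f (X t) - f x) \<le> exp (\<beta> s) * (f (X s) - f x))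
       \<and> (\<forall>xs\<in>S. (\<forall>x\<in>S. f xs \<le> f x) \<longrightarrow>
            (\<forall>t\<ge>0. f (X t) - f xs \<le> exp (\<beta> 0 - \<beta> t) * (f (X 0) - f xs)))"
proof -
  have \<beta>: "(\<beta> has_real_derivative deriv \<beta> t) (at t)" for t
    using \<open>smooth_real \<beta>\<close> unfolding smooth_real_def DERIV_deriv_iff_real_differentiable
    by (metis funpow_0)
  have X: "(X has_vector_derivative vector_derivative X (at t)) (at t)" for t
    using assms(11) by (simp add: vector_derivative_works)
  have mono: "exp (\<beta> t) * (f (X t) - f x) \<le> exp (\<beta> s) * (f (X s) - f x)"
    if "x \<in> S" and "s \<le> t" for x s t
    using that by (intro lyapunov_energy_nonincreasing[OF assms(2-4) \<beta> assms(8,10) X]) (auto intro: assms(12))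
  have "f (X t) - f x \<le> exp (\<beta> 0 - \<beta> t) * (f (X 0) - f x)" if "x \<in> S" and "0 \<le> t" for x t
  proof -
    have "f (X t) - f x \<le> exp (\<beta> 0) / exp (\<beta> t) * (f (X 0) - f x)"
      using mono[OF that] by (simp add: field_simps)
    then show ?thesis by (simp add: exp_diff)
  qed
  with mono show ?thesis by blast
qed

end
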